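(* Let $\mathcal{A}\subset\mathbb{Z}$ be a finite alphabet, let $G=(V,E)$ be a finite directed graph with edge labelling $\ell:E\to\mathcal{A}$ whose adjacency matrix $M=\sum_{a\in\mathcal{A}}M_a$ is primitive, let $\beta>1$ be a Pisot number, and let $\phi^+:\mathcal{K}^+\to\mathbb{R}$ be as in the context. Then $\phi^+(\mathcal{K}^+)$ is finite if and only if for every vertex $v\in V$ there exists $c(v)\in\mathbb{R}$ such that for every path $e_1e_2\ldots e_n$ ($n\ge1$) in $G$ connecting $v$ to itself, $$c(v)=\frac{1}{1-\beta^{-n}}\sum_{k=1}^n\frac{\ell(e_k)}{\beta^k}.$$
   Context: For $a\in\mathcal{A}$, $M_a$ is the $V\times V$ matrix with $(M_a)_{ij}=1$ if $(i,j)\in E$ and $\ell((i,j))=a$, and $0$ otherwise. A path is a sequence of edges with the terminal vertex of $e_j$ equal to the initial vertex of $e_{j+1}$; it connects the initial vertex of $e_1$ to the terminal vertex of $e_n$. $\mathcal{K}^+\subseteq\mathcal{A}^{\mathbb{N}}$ is the set of sequences $(\ell(e_k))_{k\ge1}$ for infinite paths $e_1e_2\ldots$ in $G$. A Pisot number is an algebraic integer $>1$ all of whose other Galois conjugates have modulus $<1$ (integers $\ge2$ included). $\phi^+((x_k)_{k\ge1})=\sum_{k\ge1}x_k\beta^{-k}$. *)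

theory Defs
  imports "HOL-Analysis.Analysis" "HOL-Computational_Algebra.Polynomial"
begin

type_synonym 'v edge = "'v \<times> 'v"

definition label_matrix :: "'v edge set \<Rightarrow> ('v edge \<Rightarrow> int) \<Rightarrow> int \<Rightarrow> 'v \<Rightarrow> 'v \<Rightarrow> nat" where
  "label_matrix E l a i j = (if (i, j) \<in> E \<and> l (i, j) = a then 1 else 0)"

definition adj_matrix :: "int set \<Rightarrow> 'v edge set \<Rightarrow> ('v edge \<Rightarrow> int) \<Rightarrow> 'v \<Rightarrow> 'v \<Rightarrow> nat" where
  "adj_matrix A E l i j = (\<Sum>a\<in>A. label_matrix E l a i j)"

fun mat_pow :: "'v set \<Rightarrow> ('v \<Rightarrow> 'v \<Rightarrow> nat) \<Rightarrow> nat \<Rightarrow> 'v \<Rightarrow> 'v \<Rightarrow> nat" where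
  "mat_pow V M 0 i j = (if i = j then 1 else 0)"
| "mat_pow V M (Suc n) i j = (\<Sum>m\<in>V. mat_pow V M n i m * M m j)"

definition primitive_matrix :: "'v set \<Rightarrow> ('v \<Rightarrow> 'v \<Rightarrow> nat) \<Rightarrow> bool" where
  "primitive_matrix V M \<longleftrightarrow> (\<exists>k\<ge>1. \<forall>i\<in>V. \<forall>j\<in>V. mat_pow V M k i j > 0)"

definition pisot :: "real \<Rightarrow> bool" where
  "pisot \<beta> \<longleftrightarrow> \<beta> > 1 \<and>
     (\<exists>p :: int poly. lead_coeff p = 1 \<and> irreducible p \<and>
        poly (map_poly of_int p) \<beta> = 0 \<and>
        (\<forall>z :: complex. poly (map_poly of_int p) z = 0 \<and> z \<noteq> complex_of_real \<beta> \<longrightarrow> cmod z < 1))"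

text \<open>Infinite paths e_1 e_2 ... in G, indexed from 0 (e 0 = e_1).\<close>
definition inf_path :: "'v edge set \<Rightarrow> (nat \<Rightarrow> 'v edge) \<Rightarrow> bool" where
  "inf_path E e \<longleftrightarrow> (\<forall>k. e k \<in> E \<and> snd (e k) = fst (e (Suc k)))"

text \<open>K^+: label sequences of infinite paths (index 0 holds x_1).\<close>
definition Kplus :: "'v edge set \<Rightarrow> ('v edge \<Rightarrow> int) \<Rightarrow> (nat \<Rightarrow> int) set" where
  "Kplus E l = {(\<lambda>k. l (e k)) | e. inf_path E e}"

text \<open>phi^+(x) = sum_{k>=1} x_k beta^{-k}, with x_k stored at index k-1.\<close>
definition phi_plus :: "real \<Rightarrow> (nat \<Rightarrow> int) \<Rightarrow> real" where
  "phi_plus \<beta> x = (\<Sum>k. real_of_int (x k) / \<beta> ^ Suc k)"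

definition fin_path :: "'v edge set \<Rightarrow> 'v edge list \<Rightarrow> 'v \<Rightarrow> 'v \<Rightarrow> bool" where
  "fin_path E es v w \<longleftrightarrow> es \<noteq> [] \<and> set es \<subseteq> E \<and>
     (\<forall>i. Suc i < length es \<longrightarrow> snd (es ! i) = fst (es ! Suc i)) \<and>
     fst (hd es) = v \<and> snd (last es) = w"

end

theory Submission
  imports Defs
begin

(* Running around a cycle w forever gives a periodic label sequence whose phi^+ value is the
   right-hand side of the theorem, the cycle value of w.  If two cycles w1, w2 at v have cycle
   values c1 <> c2, the paths running j times around w1 and then forever around w2 have the
   pairwise distinct values c1 + (c2 - c1) beta^(-j |w1|).  Conversely, let C(v) be the common
   cycle value at v.  By strong connectivity C(v) = sum_{k=1..m} x_k beta^(-k) + C(u) beta^(-m)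
   whenever x_1 ... x_m labels a path from v to u, and phi^+(x) satisfies the same identity with
   C(u) replaced by phi^+ of the shifted sequence.  So |phi^+(x) - C(v)| beta^m stays bounded,
   forcing phi^+(x) = C(v), and the image lies in the finite set C(V). *)

lemma phi_plus_bounded_digits:
  fixes x :: "nat \<Rightarrow> int" and B :: int
  assumes "\<beta> > 1" and "\<And>k. \<bar>x k\<bar> \<le> B"
  shows "summable (\<lambda>k. real_of_int (x k) / \<beta> ^ Suc k)"
    and "\<bar>phi_plus \<beta> x\<bar> \<le> B / (\<beta> - 1)"
proof -
  have geom: "(\<lambda>k. B / \<beta> * (1 / \<beta>) ^ k) sums (B / (\<beta> - 1))"
  proof -
    have "(\<lambda>k. (1 / \<beta>) ^ k) sums (1 / (1 - 1 / \<beta>))"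
      using assms(1) by (intro geometric_sums) auto
    then have "(\<lambda>k. B / \<beta> * (1 / \<beta>) ^ k) sums (B / \<beta> * (1 / (1 - 1 / \<beta>)))"
      by (rule sums_mult)
    moreover have "B / \<beta> * (1 / (1 - 1 / \<beta>)) = B / (\<beta> - 1)"
      using assms(1) by (simp add: field_simps)
    ultimately show ?thesis by (simp only:)
  qed
  have term_le: "\<bar>real_of_int (x k) / \<beta> ^ Suc k\<bar> \<le> B / \<beta> * (1 / \<beta>) ^ k" for k
    using assms by (simp add: abs_divide power_one_over divide_right_mono flip: of_int_abs)
  have "summable (\<lambda>k. B / \<beta> * (1 / \<beta>) ^ k)"
    using geom by (rule sums_summable)
  then have abs_summable: "summable (\<lambda>k. \<bar>real_of_int (x k) / \<beta> ^ Suc k\<bar>)"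
    by (rule summable_comparison_test') (use term_le in simp)
  then show "summable (\<lambda>k. real_of_int (x k) / \<beta> ^ Suc k)"
    by (rule summable_rabs_cancel)
  have "\<bar>phi_plus \<beta> x\<bar> \<le> (\<Sum>k. \<bar>real_of_int (x k) / \<beta> ^ Suc k\<bar>)"
    unfolding phi_plus_def using abs_summable by (rule summable_rabs)
  also have "\<dots> \<le> B / (\<beta> - 1)"
    using abs_summable geom term_le by (intro sums_le[OF _ summable_sums geom])
  finally show "\<bar>phi_plus \<beta> x\<bar> \<le> B / (\<beta> - 1)" .
qed

lemma phi_plus_shift:
  fixes x :: "nat \<Rightarrow> int" and B :: int
  assumes "\<beta> > 1" and "\<And>k. \<bar>x k\<bar> \<le> B"
  shows "phi_plus \<beta> x =
    (\<Sum>k<m. real_of_int (x k) / \<beta> ^ Suc k) + phi_plus \<beta> (\<lambda>k. x (k + m)) / \<beta> ^ m"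
proof -
  have "phi_plus \<beta> x =
      (\<Sum>k. real_of_int (x (k + m)) / \<beta> ^ Suc (k + m)) + (\<Sum>k<m. real_of_int (x k) / \<beta> ^ Suc k)"
    unfolding phi_plus_def
    by (rule suminf_split_initial_segment) (rule phi_plus_bounded_digits(1)[OF assms])
  also have "(\<Sum>k. real_of_int (x (k + m)) / \<beta> ^ Suc (k + m)) =
      (\<Sum>k. real_of_int (x (k + m)) / \<beta> ^ Suc k / \<beta> ^ m)"
    by (simp add: power_add mult.assoc)
  also have "\<dots> = phi_plus \<beta> (\<lambda>k. x (k + m)) / \<beta> ^ m"
    unfolding phi_plus_def
    by (rule suminf_divide) (rule phi_plus_bounded_digits(1)[OF assms(1)], rule assms(2))
  finally show ?thesis by simp
qed

lemma phi_plus_splice: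
  fixes x y :: "nat \<Rightarrow> int" and B :: int
  assumes "\<beta> > 1" and "\<And>k. \<bar>x k\<bar> \<le> B" and "\<And>k. \<bar>y k\<bar> \<le> B"
  shows "phi_plus \<beta> (\<lambda>k. if k < m then x k else y (k - m)) =
    phi_plus \<beta> x + (phi_plus \<beta> y - phi_plus \<beta> (\<lambda>k. x (k + m))) / \<beta> ^ m"
proof -
  define z where "z = (\<lambda>k. if k < m then x k else y (k - m))"
  have "\<bar>z k\<bar> \<le> B" for k
    using assms by (simp add: z_def)
  then have "phi_plus \<beta> z =
      (\<Sum>k<m. real_of_int (z k) / \<beta> ^ Suc k) + phi_plus \<beta> (\<lambda>k. z (k + m)) / \<beta> ^ m"
    by (rule phi_plus_shift[OF assms(1)])
  also have "(\<Sum>k<m. real_of_int (z k) / \<beta> ^ Suc k) = (\<Sum>k<m. real_of_int (x k) / \<beta> ^ Suc k)"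
    by (simp add: z_def)
  also have "\<dots> = phi_plus \<beta> x - phi_plus \<beta> (\<lambda>k. x (k + m)) / \<beta> ^ m"
    using phi_plus_shift[where x = x and m = m, OF assms(1,2)] by simp
  also have "(\<lambda>k. z (k + m)) = y"
    by (simp add: z_def)
  finally show ?thesis
    unfolding z_def by (simp add: diff_divide_distrib)
qed

lemma phi_plus_periodic:
  fixes x :: "nat \<Rightarrow> int" and B :: int
  assumes "\<beta> > 1" and "\<And>k. \<bar>x k\<bar> \<le> B" and "\<And>k. x (k + n) = x k"
  shows "phi_plus \<beta> x = (\<Sum>k<n. real_of_int (x k) / \<beta> ^ Suc k) + phi_plus \<beta> x / \<beta> ^ n"
proof -
  have "(\<lambda>k. x (k + n)) = x"
    using assms(3) by (simp add: fun_eq_iff)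
  then show ?thesis
    using phi_plus_shift[where x = x and m = n, OF assms(1,2)] by simp
qed

definition path_value :: "real \<Rightarrow> ('v edge \<Rightarrow> int) \<Rightarrow> 'v edge list \<Rightarrow> real" where
  "path_value \<beta> l es = (\<Sum>k<length es. real_of_int (l (es ! k)) / \<beta> ^ Suc k)"

definition cycle_value :: "real \<Rightarrow> ('v edge \<Rightarrow> int) \<Rightarrow> 'v edge list \<Rightarrow> real" where
  "cycle_value \<beta> l es = 1 / (1 - \<beta> powi (- int (length es))) * path_value \<beta> l es"

lemma path_value_append:
  "path_value \<beta> l (p @ q) = path_value \<beta> l p + path_value \<beta> l q / \<beta> ^ length p"
proof -
  let ?t = "\<lambda>k. real_of_int (l ((p @ q) ! k)) / \<beta> ^ Suc k"
  have "path_value \<beta> l (p @ q) = sum ?t {0..<length p} + sum ?t {length p..<length p + length q}"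
    unfolding path_value_def atLeast0LessThan[symmetric] by (simp add: sum.atLeastLessThan_concat)
  also have "sum ?t {0..<length p} = path_value \<beta> l p"
    unfolding path_value_def atLeast0LessThan by (rule sum.cong) (auto simp: nth_append)
  also have "sum ?t {length p..<length p + length q} = (\<Sum>k<length q. ?t (k + length p))"
    using sum.shift_bounds_nat_ivl[of ?t 0 "length p" "length q"]
    by (simp add: atLeast0LessThan add.commute)
  also have "\<dots> = path_value \<beta> l q / \<beta> ^ length p"
    unfolding path_value_def sum_divide_distrib by (rule sum.cong) (simp_all add: nth_append power_add)
  finally show ?thesis .
qed

lemma cycle_value_iff_fixed_point:
  assumes "\<beta> > 1" and "es \<noteq> []"
  shows "c = cycle_value \<beta> l es \<longleftrightarrow> c = path_value \<beta> l es + c / \<beta> ^ length es"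
proof -
  have "\<beta> ^ length es > 1"
    using assms by (simp add: one_less_power)
  then show ?thesis
    by (simp add: cycle_value_def power_int_minus field_simps)
qed

lemma fin_path_append:
  assumes p: "fin_path E p u v" and q: "fin_path E q v w"
  shows "fin_path E (p @ q) u w"
  unfolding fin_path_def
proof (intro conjI allI impI)
  fix i assume i: "Suc i < length (p @ q)"
  consider "Suc i < length p" | "Suc i = length p" | "length p \<le> i" by linarith
  then show "snd ((p @ q) ! i) = fst ((p @ q) ! Suc i)"
  proof cases
    case 1
    then show ?thesis using p by (simp add: fin_path_def nth_append)
  next
    case 2
    then have "i = length p - 1"
      by simp
    then have "p ! i = last p" and "q ! 0 = hd q"
      using p q by (simp_all add: fin_path_def last_conv_nth hd_conv_nth)
    then show ?thesis using 2 p q by (simp add: fin_path_def nth_append)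
  next
    case 3
    then have "Suc i - length p = Suc (i - length p)" by simp
    then show ?thesis using 3 i q by (simp add: fin_path_def nth_append)
  qed
qed (use p q in \<open>simp_all add: fin_path_def\<close>)

lemma fin_path_prefix:
  assumes e: "inf_path E e" and "0 < m"
  shows "fin_path E (map e [0..<m]) (fst (e 0)) (fst (e m))"
  unfolding fin_path_def
proof (intro conjI allI impI)
  have links: "snd (e k) = fst (e (Suc k))" for k
    using e by (simp add: inf_path_def)
  have "Suc (m - 1) = m"
    using \<open>0 < m\<close> by simp
  then show "snd (last (map e [0..<m])) = fst (e m)"
    using \<open>0 < m\<close> links[of "m - 1"] by (simp add: last_map)
  show "set (map e [0..<m]) \<subseteq> E"
    using e by (auto simp: inf_path_def)
  show "snd (map e [0..<m] ! i) = fst (map e [0..<m] ! Suc i)"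
    if "Suc i < length (map e [0..<m])" for i
    using that links by simp
qed (use \<open>0 < m\<close> in \<open>simp_all add: hd_map\<close>)

lemma inf_path_splice:
  assumes e: "inf_path E e" and e': "inf_path E e'" and "fst (e m) = fst (e' 0)"
  shows "inf_path E (\<lambda>k. if k < m then e k else e' (k - m))"
  unfolding inf_path_def
proof (intro allI conjI)
  fix k
  show "(if k < m then e k else e' (k - m)) \<in> E"
    using e e' by (simp add: inf_path_def)
  consider "Suc k < m" | "Suc k = m" | "m \<le> k" by linarith
  then show "snd (if k < m then e k else e' (k - m)) =
      fst (if Suc k < m then e (Suc k) else e' (Suc k - m))"
  proof cases
    case 1
    then show ?thesis using e by (simp add: inf_path_def)
  next
    case 2
    then show ?thesis using e assms(3) by (auto simp: inf_path_def)
  next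
    case 3
    then have "Suc k - m = Suc (k - m)" by simp
    then show ?thesis using 3 e' by (simp add: inf_path_def)
  qed
qed

lemma inf_path_vertex:
  assumes "inf_path E e" and "E \<subseteq> V \<times> V"
  shows "fst (e k) \<in> V"
proof -
  have "e k \<in> E"
    using assms(1) by (simp add: inf_path_def)
  then show ?thesis
    using assms(2) by (auto simp: mem_Times_iff)
qed

lemma abs_label_le:
  fixes l :: "'v edge \<Rightarrow> int"
  assumes "inf_path E e" and "finite E"
  shows "\<bar>l (e k)\<bar> \<le> (\<Sum>a\<in>E. \<bar>l a\<bar>)"
proof -
  have "e k \<in> E"
    using assms(1) by (simp add: inf_path_def)
  then show ?thesis
    using assms(2) by (intro member_le_sum[where f = "\<lambda>a. \<bar>l a\<bar>"]) auto
qed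

lemma adj_matrix_pos_imp_edge:
  assumes "adj_matrix A E l i j > 0"
  shows "(i, j) \<in> E"
proof (rule ccontr)
  assume "(i, j) \<notin> E"
  then have "adj_matrix A E l i j = 0"
    by (simp add: adj_matrix_def label_matrix_def)
  with assms show False
    by simp
qed

lemma fin_path_if_mat_pow_pos:
  assumes edge: "\<And>i j. M i j > 0 \<Longrightarrow> (i, j) \<in> E"
  shows "mat_pow V M n i j > 0 \<Longrightarrow> 0 < n \<Longrightarrow> \<exists>es. fin_path E es i j"
proof (induction n arbitrary: j)
  case 0
  then show ?case by simp
next
  case (Suc n)
  have "\<exists>m\<in>V. mat_pow V M n i m * M m j \<noteq> 0"
  proof (rule ccontr)
    assume "\<not> ?thesis"
    then have "mat_pow V M (Suc n) i j = 0"
      by (simp add: sum.neutral)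
    with Suc.prems(1) show False
      by simp
  qed
  then obtain m where m: "mat_pow V M n i m > 0" and "M m j > 0"
    by auto
  then have last_edge: "fin_path E [(m, j)] m j"
    using edge by (simp add: fin_path_def)
  show ?case
  proof (cases "n = 0")
    case True
    then have "m = i"
      using m by (simp split: if_splits)
    then show ?thesis
      using last_edge by blast
  next
    case False
    then obtain es where "fin_path E es i m"
      using Suc.IH m by blast
    from fin_path_append[OF this last_edge] show ?thesis
      by blast
  qed
qed

lemma fin_path_if_primitive:
  assumes "primitive_matrix V (adj_matrix A E l)" and "i \<in> V" and "j \<in> V"
  shows "\<exists>es. fin_path E es i j"
proof -
  obtain n where "n \<ge> 1" and pos: "mat_pow V (adj_matrix A E l) n i j > 0"
    using assms unfolding primitive_matrix_def by blast
  have "\<And>i j. adj_matrix A E l i j > 0 \<Longrightarrow> (i, j) \<in> E"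
    by (rule adj_matrix_pos_imp_edge)
  from fin_path_if_mat_pow_pos[OF this pos] \<open>n \<ge> 1\<close> show ?thesis
    by simp
qed

definition cycle_path :: "'v edge list \<Rightarrow> nat \<Rightarrow> 'v edge" where
  "cycle_path w k = w ! (k mod length w)"

lemma cycle_path_add_mult [simp]: "cycle_path w (k + j * length w) = cycle_path w k"
  by (simp add: cycle_path_def)

lemma inf_path_cycle_path:
  assumes "fin_path E w v v"
  shows "inf_path E (cycle_path w)"
proof -
  have "w \<noteq> []" and "set w \<subseteq> E"
    using assms by (auto simp: fin_path_def)
  have "snd (cycle_path w k) = fst (cycle_path w (Suc k))" for k
  proof (cases "Suc (k mod length w) = length w")
    case True
    then have "k mod length w = length w - 1"
      by simp
    then have "w ! (k mod length w) = last w" and "w ! 0 = hd w"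
      using \<open>w \<noteq> []\<close> by (simp_all add: last_conv_nth hd_conv_nth)
    then show ?thesis
      using True assms by (simp add: cycle_path_def mod_Suc fin_path_def)
  next
    case False
    then have "Suc (k mod length w) < length w"
      using \<open>w \<noteq> []\<close> by (metis Suc_lessI length_greater_0_conv mod_less_divisor)
    then show ?thesis
      using False assms by (simp add: cycle_path_def mod_Suc fin_path_def)
  qed
  moreover have "cycle_path w k \<in> E" for k
    using \<open>w \<noteq> []\<close> \<open>set w \<subseteq> E\<close> by (auto simp: cycle_path_def)
  ultimately show ?thesis
    by (simp add: inf_path_def)
qed

lemma phi_plus_cycle_path:
  assumes "\<beta> > 1" and "finite E" and w: "fin_path E w v v"
  shows "phi_plus \<beta> (\<lambda>k. l (cycle_path w k)) = cycle_value \<beta> l w"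
proof -
  have "w \<noteq> []"
    using w by (simp add: fin_path_def)
  have "(\<Sum>k<length w. real_of_int (l (cycle_path w k)) / \<beta> ^ Suc k) = path_value \<beta> l w"
    unfolding path_value_def by (rule sum.cong) (simp_all add: cycle_path_def)
  moreover have "phi_plus \<beta> (\<lambda>k. l (cycle_path w k)) =
      (\<Sum>k<length w. real_of_int (l (cycle_path w k)) / \<beta> ^ Suc k) +
      phi_plus \<beta> (\<lambda>k. l (cycle_path w k)) / \<beta> ^ length w"
    using cycle_path_add_mult[of w _ 1]
    by (intro phi_plus_periodic[OF assms(1) abs_label_le[OF inf_path_cycle_path[OF w] assms(2)]])
      simp
  ultimately show ?thesis
    using cycle_value_iff_fixed_point[OF assms(1) \<open>w \<noteq> []\<close>] by simp
qed

lemma cycle_value_eq_if_finite_image: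
  assumes "\<beta> > 1" and "finite E" and fin: "finite (phi_plus \<beta> ` Kplus E l)"
    and w1: "fin_path E w1 v v" and w2: "fin_path E w2 v v"
  shows "cycle_value \<beta> l w1 = cycle_value \<beta> l w2"
proof (rule ccontr)
  assume neq: "cycle_value \<beta> l w1 \<noteq> cycle_value \<beta> l w2"
  define n where "n = length w1"
  define x1 where "x1 = (\<lambda>k. l (cycle_path w1 k))"
  define x2 where "x2 = (\<lambda>k. l (cycle_path w2 k))"
  define e where "e j = (\<lambda>k. if k < j * n then cycle_path w1 k else cycle_path w2 (k - j * n))" for j
  define splice_value where "splice_value j = cycle_value \<beta> l w1 +
      (cycle_value \<beta> l w2 - cycle_value \<beta> l w1) / \<beta> ^ (j * n)" for j
  have "0 < n"
    using w1 by (simp add: n_def fin_path_def)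
  have cycle_start: "fst (cycle_path w 0) = v" if "fin_path E w v v" for w
    using that hd_conv_nth[of w] by (simp add: cycle_path_def fin_path_def)
  have "inf_path E (e j)" for j
    unfolding e_def
    by (rule inf_path_splice[OF inf_path_cycle_path[OF w1] inf_path_cycle_path[OF w2]])
      (use cycle_path_add_mult[of w1 0 j] cycle_start[OF w1] cycle_start[OF w2] in \<open>simp add: n_def\<close>)
  then have in_image: "phi_plus \<beta> (\<lambda>k. l (e j k)) \<in> phi_plus \<beta> ` Kplus E l" for j
    unfolding Kplus_def by blast
  have "phi_plus \<beta> (\<lambda>k. l (e j k)) = splice_value j" for j
  proof -
    have "(\<lambda>k. l (e j k)) = (\<lambda>k. if k < j * n then x1 k else x2 (k - j * n))"
      by (simp add: e_def x1_def x2_def fun_eq_iff)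
    moreover have "(\<lambda>k. x1 (k + j * n)) = x1"
      by (simp add: x1_def n_def)
    moreover have "phi_plus \<beta> x1 = cycle_value \<beta> l w1" and "phi_plus \<beta> x2 = cycle_value \<beta> l w2"
      unfolding x1_def x2_def
      using phi_plus_cycle_path[OF assms(1,2) w1] phi_plus_cycle_path[OF assms(1,2) w2] by simp_all
    moreover have bound1: "\<bar>x1 k\<bar> \<le> (\<Sum>a\<in>E. \<bar>l a\<bar>)"
      and bound2: "\<bar>x2 k\<bar> \<le> (\<Sum>a\<in>E. \<bar>l a\<bar>)" for k
      unfolding x1_def x2_def using inf_path_cycle_path[OF w1] inf_path_cycle_path[OF w2]
      by (simp_all add: abs_label_le \<open>finite E\<close>)
    ultimately show ?thesis
      unfolding splice_value_def
      using phi_plus_splice[where x = x1 and y = x2 and m = "j * n", OF \<open>\<beta> > 1\<close> bound1 bound2]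
      by simp
  qed
  then have "range splice_value \<subseteq> phi_plus \<beta> ` Kplus E l"
    using in_image by (metis image_subsetI)
  moreover have "inj splice_value"
  proof (rule injI)
    fix i j assume "splice_value i = splice_value j"
    then have "\<beta> ^ (i * n) = \<beta> ^ (j * n)"
      using neq by (simp add: splice_value_def)
    then show "i = j"
      using \<open>\<beta> > 1\<close> \<open>0 < n\<close> by simp
  qed
  ultimately show False
    using fin range_inj_infinite finite_subset by blast
qed

lemma cycle_constant_step:
  assumes "\<beta> > 1"
    and connected: "\<And>u v. u \<in> V \<Longrightarrow> v \<in> V \<Longrightarrow> \<exists>es. fin_path E es u v"
    and C: "\<And>v es. v \<in> V \<Longrightarrow> fin_path E es v v \<Longrightarrow> C v = cycle_value \<beta> l es"
    and "v \<in> V" and "u \<in> V" and p: "fin_path E p v u"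
  shows "C v = path_value \<beta> l p + C u / \<beta> ^ length p"
proof -
  obtain q where q: "fin_path E q u v"
    using connected \<open>u \<in> V\<close> \<open>v \<in> V\<close> by blast
  have "p @ q \<noteq> []" and "q @ p \<noteq> []"
    using p by (simp_all add: fin_path_def)
  have "C u = path_value \<beta> l (q @ p) + C u / \<beta> ^ length (q @ p)"
    using C[OF \<open>u \<in> V\<close> fin_path_append[OF q p]]
      cycle_value_iff_fixed_point[OF \<open>\<beta> > 1\<close> \<open>q @ p \<noteq> []\<close>] by simp
  \<comment> \<open>rotate the cycle \<open>q @ p\<close> at \<open>u\<close> into the cycle \<open>p @ q\<close> at \<open>v\<close>\<close>
  then have "path_value \<beta> l p + C u / \<beta> ^ length p =
      path_value \<beta> l (p @ q) + (path_value \<beta> l p + C u / \<beta> ^ length p) / \<beta> ^ length (p @ q)"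
    using \<open>\<beta> > 1\<close> by (simp add: path_value_append power_add field_simps)
  then have "path_value \<beta> l p + C u / \<beta> ^ length p = cycle_value \<beta> l (p @ q)"
    using cycle_value_iff_fixed_point[OF \<open>\<beta> > 1\<close> \<open>p @ q \<noteq> []\<close>] by blast
  also have "\<dots> = C v"
    using C[OF \<open>v \<in> V\<close> fin_path_append[OF p q]] by simp
  finally show ?thesis ..
qed

lemma phi_plus_eq_cycle_constant:
  assumes "\<beta> > 1" and "finite E" and "finite V" and "E \<subseteq> V \<times> V"
    and connected: "\<And>u v. u \<in> V \<Longrightarrow> v \<in> V \<Longrightarrow> \<exists>es. fin_path E es u v"
    and C: "\<And>v es. v \<in> V \<Longrightarrow> fin_path E es v v \<Longrightarrow> C v = cycle_value \<beta> l es"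
    and e: "inf_path E e"
  shows "phi_plus \<beta> (\<lambda>k. l (e k)) = C (fst (e 0))"
proof -
  define x where "x = (\<lambda>k. l (e k))"
  define B where "B = (\<Sum>a\<in>E. \<bar>l a\<bar>)"
  define M where "M = B / (\<beta> - 1) + (\<Sum>v\<in>V. \<bar>C v\<bar>)"
  have vertex: "fst (e k) \<in> V" for k
    by (rule inf_path_vertex[OF e \<open>E \<subseteq> V \<times> V\<close>])
  have bound: "\<bar>x k\<bar> \<le> B" for k
    unfolding x_def B_def by (rule abs_label_le[OF e \<open>finite E\<close>])
  have "\<bar>phi_plus \<beta> x - C (fst (e 0))\<bar> \<le> M / \<beta> ^ m" if "0 < m" for m
  proof -
    have "C (fst (e 0)) = path_value \<beta> l (map e [0..<m]) + C (fst (e m)) / \<beta> ^ m"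
      using cycle_constant_step[OF \<open>\<beta> > 1\<close> connected C vertex vertex fin_path_prefix[OF e that]]
      by simp
    moreover have "path_value \<beta> l (map e [0..<m]) = (\<Sum>k<m. real_of_int (x k) / \<beta> ^ Suc k)"
      by (simp add: path_value_def x_def)
    moreover have "phi_plus \<beta> x =
        (\<Sum>k<m. real_of_int (x k) / \<beta> ^ Suc k) + phi_plus \<beta> (\<lambda>k. x (k + m)) / \<beta> ^ m"
      by (rule phi_plus_shift[OF \<open>\<beta> > 1\<close> bound])
    ultimately have "phi_plus \<beta> x - C (fst (e 0)) =
        (phi_plus \<beta> (\<lambda>k. x (k + m)) - C (fst (e m))) / \<beta> ^ m"
      by (simp add: diff_divide_distrib)
    moreover have "\<bar>phi_plus \<beta> (\<lambda>k. x (k + m))\<bar> \<le> B / (\<beta> - 1)"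
      using bound by (intro phi_plus_bounded_digits(2)[OF \<open>\<beta> > 1\<close>])
    moreover have "\<bar>C (fst (e m))\<bar> \<le> (\<Sum>v\<in>V. \<bar>C v\<bar>)"
      using vertex \<open>finite V\<close> by (intro member_le_sum[where f = "\<lambda>v. \<bar>C v\<bar>"]) auto
    ultimately show ?thesis
      using \<open>\<beta> > 1\<close> by (simp add: M_def abs_divide divide_right_mono)
  qed
  then have "\<forall>m\<ge>1. \<bar>phi_plus \<beta> x - C (fst (e 0))\<bar> \<le> M / \<beta> ^ m"
    by simp
  then have "\<bar>phi_plus \<beta> x - C (fst (e 0))\<bar> \<le> 0"
    by (intro LIMSEQ_le_const[OF LIMSEQ_divide_realpow_zero[where a = M, OF \<open>\<beta> > 1\<close>]]) blast
  then show ?thesis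
    by (simp add: x_def)
qed

theorem theorem7:
  fixes A :: "int set" and V :: "'v set" and E :: "'v edge set"
    and l :: "'v edge \<Rightarrow> int" and \<beta> :: real
  assumes "finite A" and "finite V" and "E \<subseteq> V \<times> V"
    and "\<forall>e\<in>E. l e \<in> A"
    and "primitive_matrix V (adj_matrix A E l)"
    and "pisot \<beta>"
  shows "finite (phi_plus \<beta> ` Kplus E l) \<longleftrightarrow>
    (\<forall>v\<in>V. \<exists>c :: real. \<forall>es. fin_path E es v v \<longrightarrow>
        c = 1 / (1 - \<beta> powi (- int (length es))) *
            (\<Sum>k<length es. real_of_int (l (es ! k)) / \<beta> ^ Suc k))"
proof -
  have "\<beta> > 1"
    using \<open>pisot \<beta>\<close> by (simp add: pisot_def)
  have "finite E"
    using \<open>finite V\<close> \<open>E \<subseteq> V \<times> V\<close> finite_subset by blast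
  note connected = fin_path_if_primitive[OF \<open>primitive_matrix V (adj_matrix A E l)\<close>]
  show ?thesis
    unfolding path_value_def[symmetric] cycle_value_def[symmetric]
  proof
    assume "finite (phi_plus \<beta> ` Kplus E l)"
    from cycle_value_eq_if_finite_image[OF \<open>\<beta> > 1\<close> \<open>finite E\<close> this]
    show "\<forall>v\<in>V. \<exists>c. \<forall>es. fin_path E es v v \<longrightarrow> c = cycle_value \<beta> l es"
      by metis
  next
    assume "\<forall>v\<in>V. \<exists>c. \<forall>es. fin_path E es v v \<longrightarrow> c = cycle_value \<beta> l es"
    then obtain C where C: "\<And>v es. v \<in> V \<Longrightarrow> fin_path E es v v \<Longrightarrow> C v = cycle_value \<beta> l es"
      by metis
    have "phi_plus \<beta> (\<lambda>k. l (e k)) \<in> C ` V" if "inf_path E e" for e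
      using phi_plus_eq_cycle_constant[OF \<open>\<beta> > 1\<close> \<open>finite E\<close> \<open>finite V\<close> \<open>E \<subseteq> V \<times> V\<close>
          connected C that]
        inf_path_vertex[OF that \<open>E \<subseteq> V \<times> V\<close>] by simp
    then have "phi_plus \<beta> ` Kplus E l \<subseteq> C ` V"
      unfolding Kplus_def by blast
    then show "finite (phi_plus \<beta> ` Kplus E l)"
      using \<open>finite V\<close> finite_subset by blast
  qed
qed

end
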